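(* Let $n \ge 2$ be an integer, let $\varepsilon > 0$, and let $p_s, p_{is}, p_d, p_{id}, p_m, p_{im}, p_{ic} \in (0,1]$. Define \[ P_{\mathrm{all}} = p_s\, p_{is}^{\,n-1}\, p_d^{\,n-1}\, p_{id}^{\,n(\lceil \log_2 n\rceil - 2) + 2}, \qquad P_{\mathrm{lin}} = p_s\, p_{is}^{\,n-1}\, p_d^{\,n-1}\, p_{id}^{\,n(\lceil n/2\rceil - 2) + 2}, \] and let $P_{\mathrm{ad}}$ be a real number satisfying \[ P_{\mathrm{ad}} \ge p_s^{\,n+\lfloor n/2\rfloor}\, p_{is}^{\,n+\lceil n/2\rceil - 1}\, p_d^{\,2(n-1)}\, p_{id}^{\,2}\, p_m^{\,n-1}\, p_{im}^{\,n}\, p_{ic}^{\,n}. \] Assume the first-order identifications $p_s = p_{is} = 1$, $p_m = p_d$, and $p_{im} = p_{ic} = p_{id}$. Then: (i) if $p_d \ge (1+\varepsilon)\, p_{id}^{\frac{n}{n-1}\left(\lceil \log_2 n\rceil/2 - 2\right)}$, then $P_{\mathrm{ad}} \ge (1+\varepsilon)^{2(n-1)} P_{\mathrm{all}}$; (ii) if $p_d \ge (1+\varepsilon)\, p_{id}^{\frac{n}{n-1}\left(\lceil n/2\rceil/2 - 2\right)}$, then $P_{\mathrm{ad}} \ge (1+\varepsilon)^{2(n-1)} P_{\mathrm{lin}}$.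
   Context: Setting: preparation of the $n$-qubit GHZ state $\frac{1}{\sqrt 2}(|0\rangle^{\otimes n} + |1\rangle^{\otimes n})$ under a worst-case error model in which every error (in a gate, an idle period, or a measurement) makes the final state incorrect and errors never cancel. The parameters are: $p_s$ = probability a single-qubit gate succeeds; $p_d$ = probability a two-qubit (CNOT) gate succeeds; $p_m$ = probability a measurement returns the correct value; $p_{is}$, $p_{id}$, $p_{im}$, $p_{ic}$ = probability a qubit remains coherent while idling during a single-qubit gate, a two-qubit gate, a measurement, and an intermediate classical computation, respectively. $P_{\mathrm{all}}$ is the success probability of the non-adaptive protocol with all-to-all connectivity (Hadamard on one qubit, then $\lceil\log_2 n\rceil$ layers of CNOTs, doubling the number of entangled qubits each layer); $P_{\mathrm{lin}}$ is that of the non-adaptive protocol with linear nearest-neighbor connectivity (Hadamard on a middle qubit, then CNOT layers spreading outward two qubits per layer); $P_{\mathrm{ad}}$ is the success probability of the constant-depth adaptive protocol on $2n-1$ qubits (Hadamards, two layers of CNOTs onto $n-1$ auxiliary qubits, measurement of the auxiliaries, then Pauli-$X$ corrections determined by prefix parities of the outcomes). The paper writes such comparisons with $\gtrsim$, meaning the inequality holds after applying the first-order assumptions $p_s \approx 1 \approx p_{is}$, $p_d \approx p_m$, $p_{id} \approx p_{im} \approx p_{ic}$; here these are imposed as equalities. *)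

theory Defs
  imports Complex_Main
begin

text \<open>Success probability of the non-adaptive GHZ protocol with all-to-all connectivity.
  Exponents are integers (they may be 0 for n = 2), hence powi.\<close>
definition P_all :: "nat \<Rightarrow> real \<Rightarrow> real \<Rightarrow> real \<Rightarrow> real \<Rightarrow> real" where
  "P_all n ps pis pd pid =
     ps * pis ^ (n - 1) * pd ^ (n - 1)
       * pid powi (int n * (\<lceil>log 2 (real n)\<rceil> - 2) + 2)"

definition P_lin :: "nat \<Rightarrow> real \<Rightarrow> real \<Rightarrow> real \<Rightarrow> real \<Rightarrow> real" where
  "P_lin n ps pis pd pid =
     ps * pis ^ (n - 1) * pd ^ (n - 1)
       * pid powi (int n * (\<lceil>real n / 2\<rceil> - 2) + 2)"

definition P_ad_bound :: "nat \<Rightarrow> real \<Rightarrow> real \<Rightarrow> real \<Rightarrow> real \<Rightarrow> real \<Rightarrow> real \<Rightarrow> real \<Rightarrow> real" where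
  "P_ad_bound n ps pis pd pid pm pim pic =
     ps ^ (n + n div 2) * pis ^ nat (int n + \<lceil>real n / 2\<rceil> - 1) * pd ^ (2 * (n - 1))
       * pid ^ 2 * pm ^ (n - 1) * pim ^ n * pic ^ n"

end

theory Submission
  imports Defs
begin

text \<open>Under the first-order identifications the adaptive bound is p_d^(3(n-1)) p_id^(2n+2),
  while a non-adaptive protocol with L CNOT layers succeeds with probability
  p_d^(n-1) p_id^(n(L-2)+2). Their quotient is p_d^(2(n-1)) p_id^(-n(L-4)), and raising the
  threshold hypothesis on p_d to the power 2(n-1) bounds it below by (1+\<epsilon>)^(2(n-1)).
  The two claims are the cases L = \<lceil>log 2 n\<rceil> and L = \<lceil>n/2\<rceil>.\<close>

lemma power_mono_mult_powr:
  fixes a b c x :: real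
  assumes "0 \<le> c" and "0 < b" and "c * b powr x \<le> a"
  shows "c ^ k * b powr (real k * x) \<le> a ^ k"
proof -
  have "(c * b powr x) ^ k \<le> a ^ k"
    using assms by (intro power_mono) auto
  moreover have "(c * b powr x) ^ k = c ^ k * b powr (real k * x)"
    using \<open>0 < b\<close> by (simp add: power_mult_distrib powr_power mult.commute)
  ultimately show ?thesis by simp
qed

lemma P_ad_bound_first_order:
  "P_ad_bound n 1 1 pd pid pd pid pid = pd ^ (3 * (n - 1)) * pid ^ (2 * n + 2)"
  by (simp add: P_ad_bound_def numeral_3_eq_3 mult_2 mult_2_right power2_eq_square power_add mult_ac)

lemma adaptive_bound_ge_layered:
  fixes n :: nat and L :: int and e pd pid :: real
  assumes "2 \<le> n" and "0 < e" and "0 < pd" and "0 < pid"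
    and threshold: "(1 + e) * pid powr (real n / (real n - 1) * (real_of_int L / 2 - 2)) \<le> pd"
  shows "(1 + e) ^ (2 * (n - 1)) * (pd ^ (n - 1) * pid powi (int n * (L - 2) + 2))
           \<le> pd ^ (3 * (n - 1)) * pid ^ (2 * n + 2)"
proof -
  have "real (2 * (n - 1)) * (real n / (real n - 1) * (real_of_int L / 2 - 2))
          = real n * (real_of_int L - 4)"
    using \<open>2 \<le> n\<close> by (simp add: of_nat_diff field_simps)
  with power_mono_mult_powr[OF _ \<open>0 < pid\<close> threshold, of "2 * (n - 1)"] \<open>0 < e\<close>
  have quotient: "(1 + e) ^ (2 * (n - 1)) * pid powr (real n * (real_of_int L - 4)) \<le> pd ^ (2 * (n - 1))"
    by simp
  have "pid powi (int n * (L - 2) + 2) = pid powr real_of_int (int n * (L - 2) + 2)"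
    using \<open>0 < pid\<close> by (intro powr_real_of_int'[symmetric]) auto
  also have "\<dots> = pid powr (real n * (real_of_int L - 4)) * pid powr real (2 * n + 2)"
    by (simp add: powr_add[symmetric] algebra_simps)
  also have "\<dots> = pid powr (real n * (real_of_int L - 4)) * pid ^ (2 * n + 2)"
    using \<open>0 < pid\<close> by (simp only: powr_realpow)
  finally have "(1 + e) ^ (2 * (n - 1)) * (pd ^ (n - 1) * pid powi (int n * (L - 2) + 2))
      = ((1 + e) ^ (2 * (n - 1)) * pid powr (real n * (real_of_int L - 4))) * (pd ^ (n - 1) * pid ^ (2 * n + 2))"
    by simp
  also have "\<dots> \<le> pd ^ (2 * (n - 1)) * (pd ^ (n - 1) * pid ^ (2 * n + 2))"
    using quotient \<open>0 < pd\<close> \<open>0 < pid\<close> by (intro mult_right_mono) auto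
  also have "\<dots> = pd ^ (3 * (n - 1)) * pid ^ (2 * n + 2)"
    by (simp add: power_add[symmetric] numeral_3_eq_3 add_mult_distrib)
  finally show ?thesis .
qed

theorem theorem1:
  fixes n :: nat and \<epsilon> ps pis pd pid pm pim pic Pad :: real
  assumes n2: "n \<ge> 2" and eps: "\<epsilon> > 0"
    and ps: "0 < ps" "ps \<le> 1" and pis: "0 < pis" "pis \<le> 1"
    and pd: "0 < pd" "pd \<le> 1" and pid: "0 < pid" "pid \<le> 1"
    and pm: "0 < pm" "pm \<le> 1" and pim: "0 < pim" "pim \<le> 1"
    and pic: "0 < pic" "pic \<le> 1"
    and Pad: "Pad \<ge> P_ad_bound n ps pis pd pid pm pim pic"
    and first_order: "ps = 1" "pis = 1" "pm = pd" "pim = pid" "pic = pid"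
  shows "(pd \<ge> (1 + \<epsilon>) * pid powr (real n / (real n - 1) * (real_of_int \<lceil>log 2 (real n)\<rceil> / 2 - 2))
            \<longrightarrow> Pad \<ge> (1 + \<epsilon>) ^ (2 * (n - 1)) * P_all n ps pis pd pid)
       \<and> (pd \<ge> (1 + \<epsilon>) * pid powr (real n / (real n - 1) * (real_of_int \<lceil>real n / 2\<rceil> / 2 - 2))
            \<longrightarrow> Pad \<ge> (1 + \<epsilon>) ^ (2 * (n - 1)) * P_lin n ps pis pd pid)"
proof -
  have Pad_ge: "pd ^ (3 * (n - 1)) * pid ^ (2 * n + 2) \<le> Pad"
    using Pad first_order by (simp add: P_ad_bound_first_order)
  note layered = adaptive_bound_ge_layered[OF n2 eps pd(1) pid(1)]
  show ?thesis
    using layered[THEN order_trans, OF _ Pad_ge] first_order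
    by (simp add: P_all_def P_lin_def)
qed

end
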